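(* Let $X$ be a real Banach space, let $1<r\le p<\infty$, and let $n$ be the largest integer strictly less than $r$. Let $f:X\to\mathbb{R}$ be $p$-homogeneous, $C^n$ on $X\setminus\{0\}$, with $f^{(n)}$ $(r-n)$-Hölder on the unit sphere of $X$. Then $f$ is $C^n$ on all of $X$, $f^{(j)}(0)=0$ for $j=1,\dots,n$, and there are constants $C_1,\dots,C_n>0$ such that for all $x,y\in X$: (1) $\|f^{(n)}(x)-f^{(n)}(y)\|\le C_n(\max\{\|x\|,\|y\|\})^{p-r}\|x-y\|^{r-n}$; (2) $\|f^{(j)}(x)-f^{(j)}(y)\|\le C_j(\max\{\|x\|,\|y\|\})^{p-(j+1)}\|x-y\|$ for $j=1,\dots,n-1$.
   Context: A function $f$ is $p$-homogeneous if $f(\lambda x)=|\lambda|^pf(x)$ for all $x\in X$, $\lambda\in\mathbb{R}$. Derivatives are Fréchet derivatives, with the operator norm on multilinear maps. *)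

theory Defs
  imports "HOL-Analysis.Analysis"
begin

text \<open>A j-linear form on X is represented as a function on lists of vectors;
 only its values on lists of length j are relevant.  The first list entry is the
 most recently differentiated direction: D (j+1) x (h # vs) = (D(D j) x h) vs.\<close>

definition multilinear_form :: "nat \<Rightarrow> ('a::real_normed_vector list \<Rightarrow> real) \<Rightarrow> bool" where
  "multilinear_form j M \<longleftrightarrow>
     (\<forall>us vs. length us + length vs + 1 = j \<longrightarrow> linear (\<lambda>v. M (us @ v # vs)))"

definition bounded_form :: "nat \<Rightarrow> ('a::real_normed_vector list \<Rightarrow> real) \<Rightarrow> bool" where
  "bounded_form j M \<longleftrightarrow>
     (\<exists>K. \<forall>vs. length vs = j \<longrightarrow> \<bar>M vs\<bar> \<le> K * prod_list (map norm vs))"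

definition mnorm :: "nat \<Rightarrow> ('a::real_normed_vector list \<Rightarrow> real) \<Rightarrow> real" where
  "mnorm j M = (SUP vs \<in> {vs. length vs = j \<and> (\<forall>v\<in>set vs. norm v \<le> 1)}. \<bar>M vs\<bar>)"

definition higher_derivs ::
  "('a::real_normed_vector \<Rightarrow> real) \<Rightarrow> (nat \<Rightarrow> 'a \<Rightarrow> 'a list \<Rightarrow> real) \<Rightarrow> nat \<Rightarrow> 'a set \<Rightarrow> bool" where
  "higher_derivs f D n U \<longleftrightarrow>
     (\<forall>x\<in>U. D 0 x [] = f x) \<and>
     (\<forall>j\<le>n. \<forall>x\<in>U. multilinear_form j (D j x) \<and> bounded_form j (D j x)) \<and>
     (\<forall>j<n. \<forall>x\<in>U.
        ((\<lambda>y. mnorm j (\<lambda>vs. D j y vs - D j x vs - D (Suc j) x ((y - x) # vs)) / norm (y - x))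
          \<longlongrightarrow> 0) (at x)) \<and>
     (\<forall>x\<in>U. ((\<lambda>y. mnorm n (\<lambda>vs. D n y vs - D n x vs)) \<longlongrightarrow> 0) (at x within U))"

definition p_homogeneous :: "real \<Rightarrow> ('a::real_vector \<Rightarrow> real) \<Rightarrow> bool" where
  "p_homogeneous p f \<longleftrightarrow> (\<forall>x c::real. f (c *\<^sub>R x) = \<bar>c\<bar> powr p * f x)"

end

theory Submission
  imports Defs
begin

text \<open>Differentiating \<open>f (c *\<^sub>R x) = c powr p * f x\<close> shows that the \<open>j\<close>-th derivative is
  positively \<open>(p - j)\<close>-homogeneous on \<open>X - {0}\<close>, and differentiating along the ray through \<open>x\<close>
  gives Euler's identity \<open>D (j+1) x (x # vs) = (p - j) * D j x vs\<close>. So the bound for \<open>D n\<close> on the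
  unit sphere, which follows from the Hoelder condition, propagates down to every \<open>D j\<close>, and
  homogeneity turns it into the growth bound \<open>mnorm j (D j x) \<le> B j * norm x powr (p - j)\<close>.
  Since \<open>p - j > 0\<close> for \<open>j \<le> n\<close>, extending every \<open>D j\<close> by zero at the origin yields the
  derivatives there. The Lipschitz bounds for \<open>j < n\<close> follow from the mean value theorem and the
  growth of \<open>D (j+1)\<close>; for the Hoelder bound on \<open>D n\<close> one scales to \<open>max (norm x) (norm y) = 1\<close>
  and compares with the radial projection of the shorter vector onto the sphere.\<close>

definition unit_lists :: "nat \<Rightarrow> 'a::real_normed_vector list set" where
  "unit_lists j = {vs. length vs = j \<and> (\<forall>v\<in>set vs. norm v \<le> 1)}"

lemma mnorm_unit_lists: "mnorm j M = (SUP vs \<in> unit_lists j. \<bar>M vs\<bar>)"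
  unfolding mnorm_def unit_lists_def by simp

lemma replicate_zero_in_unit_lists: "replicate j 0 \<in> unit_lists j"
  unfolding unit_lists_def by auto

lemma Cons_in_unit_lists: "norm h \<le> 1 \<Longrightarrow> vs \<in> unit_lists j \<Longrightarrow> h # vs \<in> unit_lists (Suc j)"
  unfolding unit_lists_def by auto

lemma length_unit_lists: "vs \<in> unit_lists j \<Longrightarrow> length vs = j"
  unfolding unit_lists_def by auto

lemma prod_list_norm_nonneg: "0 \<le> prod_list (map norm vs)"
  by (rule prod_list_nonneg) auto

lemma prod_list_norm_le_one: "(\<forall>v\<in>set vs. norm v \<le> 1) \<Longrightarrow> prod_list (map norm vs) \<le> (1::real)"
  by (induction vs) (auto intro: mult_le_one prod_list_norm_nonneg)

lemma bounded_form_bdd_above: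
  assumes "bounded_form j M"
  shows "bdd_above ((\<lambda>vs. \<bar>M vs\<bar>) ` unit_lists j)"
proof -
  obtain K where K: "\<And>vs. length vs = j \<Longrightarrow> \<bar>M vs\<bar> \<le> K * prod_list (map norm vs)"
    using assms unfolding bounded_form_def by blast
  have "\<bar>M vs\<bar> \<le> \<bar>K\<bar>" if "vs \<in> unit_lists j" for vs
  proof -
    let ?P = "prod_list (map norm vs)"
    have P: "0 \<le> ?P" "?P \<le> 1"
      using that prod_list_norm_nonneg[of vs] prod_list_norm_le_one[of vs] by (auto simp: unit_lists_def)
    have "\<bar>M vs\<bar> \<le> K * ?P" using K that by (simp add: unit_lists_def)
    also have "\<dots> \<le> \<bar>K\<bar> * ?P" using P by (intro mult_right_mono) auto
    also have "\<dots> \<le> \<bar>K\<bar>" using P by (intro mult_left_le) auto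
    finally show ?thesis .
  qed
  then show ?thesis by (intro bdd_aboveI2) blast
qed

lemma mnorm_upper: "bounded_form j M \<Longrightarrow> vs \<in> unit_lists j \<Longrightarrow> \<bar>M vs\<bar> \<le> mnorm j M"
  unfolding mnorm_unit_lists by (rule cSUP_upper) (auto intro: bounded_form_bdd_above)

lemma mnorm_least: "(\<And>vs. vs \<in> unit_lists j \<Longrightarrow> \<bar>M vs\<bar> \<le> B) \<Longrightarrow> mnorm j M \<le> B"
  unfolding mnorm_unit_lists by (rule cSUP_least) (use replicate_zero_in_unit_lists in auto)

lemma mnorm_nonneg: "bounded_form j M \<Longrightarrow> 0 \<le> mnorm j M"
  using mnorm_upper[OF _ replicate_zero_in_unit_lists, of j M] by linarith

lemma mnorm_cong: "(\<And>vs. vs \<in> unit_lists j \<Longrightarrow> M vs = M' vs) \<Longrightarrow> mnorm j M = mnorm j M'"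
  unfolding mnorm_unit_lists by (rule SUP_cong) auto

lemma mnorm_minus_commute: "mnorm j (\<lambda>vs. A vs - B vs) = mnorm j (\<lambda>vs. B vs - A vs)"
  unfolding mnorm_unit_lists by (simp add: abs_minus_commute)

lemma bounded_form_zero: "bounded_form j (\<lambda>vs. 0)"
  unfolding bounded_form_def by (auto intro: exI[of _ 0])

lemma mnorm_zero: "mnorm j (\<lambda>vs::'a::real_normed_vector list. 0) = 0"
  by (intro antisym mnorm_least mnorm_nonneg bounded_form_zero) simp

lemma bounded_form_add:
  assumes "bounded_form j A" "bounded_form j B"
  shows "bounded_form j (\<lambda>vs. A vs + B vs)"
proof -
  obtain K L where
      K: "\<And>vs. length vs = j \<Longrightarrow> \<bar>A vs\<bar> \<le> K * prod_list (map norm vs)"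
    and L: "\<And>vs. length vs = j \<Longrightarrow> \<bar>B vs\<bar> \<le> L * prod_list (map norm vs)"
    using assms unfolding bounded_form_def by blast
  have "\<bar>A vs + B vs\<bar> \<le> (K + L) * prod_list (map norm vs)" if "length vs = j" for vs
    using K[OF that] L[OF that] by (simp add: distrib_right)
  then show ?thesis unfolding bounded_form_def by blast
qed

lemma bounded_form_cmult:
  assumes "bounded_form j A"
  shows "bounded_form j (\<lambda>vs. c * A vs)"
proof -
  obtain K where K: "\<And>vs. length vs = j \<Longrightarrow> \<bar>A vs\<bar> \<le> K * prod_list (map norm vs)"
    using assms unfolding bounded_form_def by blast
  have "\<bar>c * A vs\<bar> \<le> (\<bar>c\<bar> * K) * prod_list (map norm vs)" if "length vs = j" for vs
    using mult_left_mono[OF K[OF that], of "\<bar>c\<bar>"] by (simp add: abs_mult mult.assoc)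
  then show ?thesis unfolding bounded_form_def by blast
qed

lemma bounded_form_diff:
  assumes "bounded_form j A" "bounded_form j B"
  shows "bounded_form j (\<lambda>vs. A vs - B vs)"
  using bounded_form_add[OF assms(1) bounded_form_cmult[OF assms(2), of "-1"]] by simp

lemma bounded_form_Cons:
  assumes "bounded_form (Suc j) A"
  shows "bounded_form j (\<lambda>vs. A (h # vs))"
proof -
  obtain K where K: "\<And>vs. length vs = Suc j \<Longrightarrow> \<bar>A vs\<bar> \<le> K * prod_list (map norm vs)"
    using assms unfolding bounded_form_def by blast
  have "\<bar>A (h # vs)\<bar> \<le> (K * norm h) * prod_list (map norm vs)" if "length vs = j" for vs
    using K[of "h # vs"] that by (simp add: mult.assoc)
  then show ?thesis unfolding bounded_form_def by blast
qed

lemma mnorm_add_le: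
  assumes "bounded_form j A" "bounded_form j B"
  shows "mnorm j (\<lambda>vs. A vs + B vs) \<le> mnorm j A + mnorm j B"
proof (rule mnorm_least)
  fix vs :: "'a list" assume "vs \<in> unit_lists j"
  then show "\<bar>A vs + B vs\<bar> \<le> mnorm j A + mnorm j B"
    using abs_triangle_ineq[of "A vs" "B vs"] mnorm_upper[OF assms(1)] mnorm_upper[OF assms(2)]
    by (meson add_mono order_trans)
qed

lemma mnorm_cmult:
  assumes "bounded_form j A"
  shows "mnorm j (\<lambda>vs. c * A vs) = \<bar>c\<bar> * mnorm j A"
proof (cases "c = 0")
  case True
  then show ?thesis using mnorm_zero by simp
next
  case False
  show ?thesis
  proof (rule antisym)
    show "mnorm j (\<lambda>vs. c * A vs) \<le> \<bar>c\<bar> * mnorm j A"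
      by (rule mnorm_least) (auto simp: abs_mult intro: mult_left_mono mnorm_upper[OF assms])
    have "mnorm j A \<le> mnorm j (\<lambda>vs. c * A vs) / \<bar>c\<bar>"
    proof (rule mnorm_least)
      fix vs :: "'a list" assume "vs \<in> unit_lists j"
      then have "\<bar>c * A vs\<bar> \<le> mnorm j (\<lambda>vs. c * A vs)"
        by (rule mnorm_upper[OF bounded_form_cmult[OF assms]])
      then show "\<bar>A vs\<bar> \<le> mnorm j (\<lambda>vs. c * A vs) / \<bar>c\<bar>"
        using False by (simp add: abs_mult field_simps)
    qed
    then show "\<bar>c\<bar> * mnorm j A \<le> mnorm j (\<lambda>vs. c * A vs)"
      using False by (simp add: field_simps)
  qed
qed

lemma multilinear_form_Cons_scaleR:
  assumes "multilinear_form (Suc j) A" "length vs = j"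
  shows "A ((c *\<^sub>R h) # vs) = c * A (h # vs)"
proof -
  have "linear (\<lambda>v. A ([] @ v # vs))"
    using assms unfolding multilinear_form_def by (auto dest: spec[of _ "[]"])
  then show ?thesis using linear_cmul[of "\<lambda>v. A (v # vs)" c h] by simp
qed

lemma abs_form_Cons_le:
  assumes "multilinear_form (Suc j) A" "bounded_form (Suc j) A" "vs \<in> unit_lists j"
  shows "\<bar>A (h # vs)\<bar> \<le> mnorm (Suc j) A * norm h"
proof (cases "h = 0")
  case True
  then show ?thesis
    using multilinear_form_Cons_scaleR[OF assms(1) length_unit_lists[OF assms(3)], of 0 0] by simp
next
  case False
  have "A (h # vs) = A ((norm h *\<^sub>R (h /\<^sub>R norm h)) # vs)"
    using False by simp
  also have "\<dots> = norm h * A ((h /\<^sub>R norm h) # vs)"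
    by (rule multilinear_form_Cons_scaleR[OF assms(1) length_unit_lists[OF assms(3)]])
  finally have "A (h # vs) = norm h * A ((h /\<^sub>R norm h) # vs)" .
  moreover have "\<bar>A ((h /\<^sub>R norm h) # vs)\<bar> \<le> mnorm (Suc j) A"
    using False by (intro mnorm_upper[OF assms(2)] Cons_in_unit_lists assms(3)) simp
  ultimately show ?thesis by (simp add: abs_mult mult.commute mult_left_mono)
qed

lemma p_homogeneous_zero:
  assumes "p_homogeneous p f"
  shows "f 0 = 0"
proof -
  have "f (0 *\<^sub>R 0) = \<bar>0\<bar> powr p * f 0" using assms unfolding p_homogeneous_def by blast
  then show ?thesis by simp
qed

lemma higher_derivsD:
  assumes "higher_derivs f D n U"
  shows "\<And>x. x \<in> U \<Longrightarrow> D 0 x [] = f x"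
    and "\<And>j x. j \<le> n \<Longrightarrow> x \<in> U \<Longrightarrow> multilinear_form j (D j x)"
    and "\<And>j x. j \<le> n \<Longrightarrow> x \<in> U \<Longrightarrow> bounded_form j (D j x)"
    and "\<And>j x. j < n \<Longrightarrow> x \<in> U \<Longrightarrow>
        ((\<lambda>y. mnorm j (\<lambda>vs. D j y vs - D j x vs - D (Suc j) x ((y - x) # vs)) / norm (y - x))
          \<longlongrightarrow> 0) (at x)"
    and "\<And>x. x \<in> U \<Longrightarrow> ((\<lambda>y. mnorm n (\<lambda>vs. D n y vs - D n x vs)) \<longlongrightarrow> 0) (at x within U)"
  using assms unfolding higher_derivs_def by auto

lemma filterlim_line_at:
  fixes h :: "'a::real_normed_vector"
  assumes "h \<noteq> 0"
  shows "filterlim (\<lambda>s. a + s *\<^sub>R h) (at (a + s0 *\<^sub>R h)) (at s0)"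
  unfolding filterlim_at
proof
  show "\<forall>\<^sub>F s in at s0. a + s *\<^sub>R h \<in> UNIV \<and> a + s *\<^sub>R h \<noteq> a + s0 *\<^sub>R h"
    using eventually_neq_at_within[of s0 s0] by eventually_elim (use assms in auto)
  show "((\<lambda>s. a + s *\<^sub>R h) \<longlongrightarrow> a + s0 *\<^sub>R h) (at s0)"
    by (intro tendsto_intros)
qed

lemma has_real_derivative_along_line_if_remainder:
  fixes E :: "'a::real_normed_vector \<Rightarrow> 'a list \<Rightarrow> real" and A :: "'a list \<Rightarrow> real" and z :: 'a
  defines "R y vs \<equiv> E y vs - E z vs - A ((y - z) # vs)"
  assumes small: "((\<lambda>y. mnorm j (R y) / norm (y - z)) \<longlongrightarrow> 0) (at z)"
    and bounded: "\<forall>\<^sub>F y in at z. bounded_form j (R y)"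
    and lin: "\<And>c k. A ((c *\<^sub>R k) # vs) = c * A (k # vs)"
    and h: "h \<noteq> 0" and z: "z = a + s0 *\<^sub>R h" and vs: "vs \<in> unit_lists j"
  shows "((\<lambda>s. E (a + s *\<^sub>R h) vs) has_real_derivative A (h # vs)) (at s0)"
proof -
  note line = filterlim_line_at[OF h, of a s0, folded z]
  have "\<forall>\<^sub>F s in at s0.
      norm ((E (a + s *\<^sub>R h) vs - E z vs) / (s - s0) - A (h # vs))
        \<le> norm (mnorm j (R (a + s *\<^sub>R h)) / norm (a + s *\<^sub>R h - z)) * norm h"
    using filterlim_iff[THEN iffD1, OF line, rule_format, OF bounded] eventually_neq_at_within[of s0 s0]
  proof eventually_elim
    case (elim s)
    have yz: "a + s *\<^sub>R h - z = (s - s0) *\<^sub>R h" unfolding z by (simp add: algebra_simps)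
    have "(E (a + s *\<^sub>R h) vs - E z vs) / (s - s0) - A (h # vs) = R (a + s *\<^sub>R h) vs / (s - s0)"
      unfolding R_def yz lin using elim(2) by (simp add: field_simps)
    moreover have "\<bar>R (a + s *\<^sub>R h) vs\<bar> \<le> mnorm j (R (a + s *\<^sub>R h))"
      using mnorm_upper[OF elim(1) vs] .
    ultimately have "norm ((E (a + s *\<^sub>R h) vs - E z vs) / (s - s0) - A (h # vs))
        \<le> mnorm j (R (a + s *\<^sub>R h)) / \<bar>s - s0\<bar>"
      by (simp add: abs_div divide_right_mono)
    also have "\<dots> = norm (mnorm j (R (a + s *\<^sub>R h)) / norm (a + s *\<^sub>R h - z)) * norm h"
      unfolding yz using elim h mnorm_nonneg[OF elim(1)] by simp
    finally show ?case .
  qed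
  then have "((\<lambda>s. (E (a + s *\<^sub>R h) vs - E z vs) / (s - s0) - A (h # vs)) \<longlongrightarrow> 0) (at s0)"
    by (rule tendsto_0_le[OF filterlim_compose[OF small line]])
  then show ?thesis
    unfolding has_field_derivative_iff z by (simp add: LIM_zero_iff)
qed

lemma higher_derivs_has_real_derivative_along_line:
  fixes D :: "nat \<Rightarrow> 'a::real_normed_vector \<Rightarrow> 'a list \<Rightarrow> real"
  assumes hd: "higher_derivs f D n U" and U: "open U" and j: "j < n"
    and z: "a + s0 *\<^sub>R h \<in> U" and vs: "vs \<in> unit_lists j"
  shows "((\<lambda>s. D j (a + s *\<^sub>R h) vs) has_real_derivative D (Suc j) (a + s0 *\<^sub>R h) (h # vs)) (at s0)"
proof -
  define z where "z = a + s0 *\<^sub>R h"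
  have lin: "D (Suc j) z ((c *\<^sub>R k) # vs) = c * D (Suc j) z (k # vs)" for c k
    using higher_derivsD(2)[OF hd, of "Suc j" z] j z vs
    by (intro multilinear_form_Cons_scaleR) (auto simp: z_def length_unit_lists)
  show ?thesis
  proof (cases "h = 0")
    case True
    then show ?thesis using lin[of 0 0] by (simp add: z_def)
  next
    case False
    show ?thesis
      unfolding z_def[symmetric]
    proof (rule has_real_derivative_along_line_if_remainder[OF _ _ lin False z_def vs])
      show "((\<lambda>y. mnorm j (\<lambda>vs. D j y vs - D j z vs - D (Suc j) z ((y - z) # vs)) / norm (y - z))
          \<longlongrightarrow> 0) (at z)"
        using higher_derivsD(4)[OF hd j] z by (simp add: z_def)
      show "\<forall>\<^sub>F y in at z. bounded_form j (\<lambda>vs. D j y vs - D j z vs - D (Suc j) z ((y - z) # vs))"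
        using eventually_at_in_open'[OF U z[folded z_def]]
      proof eventually_elim
        case (elim y)
        then show ?case
          using higher_derivsD(3)[OF hd] j z[folded z_def]
          by (intro bounded_form_diff bounded_form_Cons) auto
      qed
    qed
  qed
qed

lemma higher_derivs_homogeneous:
  fixes f :: "'a::real_normed_vector \<Rightarrow> real"
  assumes hd: "higher_derivs f D n (- {0})" and ph: "p_homogeneous p f"
  shows "j \<le> n \<Longrightarrow> x \<noteq> 0 \<Longrightarrow> c > 0 \<Longrightarrow> vs \<in> unit_lists j \<Longrightarrow>
           D j (c *\<^sub>R x) vs = c powr (p - real j) * D j x vs"
proof (induction j arbitrary: x c vs)
  case 0
  then show ?case
    using higher_derivsD(1)[OF hd] ph by (simp add: p_homogeneous_def unit_lists_def)
next
  case (Suc j)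
  obtain h ws where vs: "vs = h # ws" and ws: "ws \<in> unit_lists j"
    using Suc.prems(4) by (cases vs) (auto simp: unit_lists_def)
  have j: "j < n" and x: "x \<noteq> 0" and c: "c > 0" using Suc.prems by auto
  have U: "open (- {0::'a})" by auto
  have "\<forall>\<^sub>F s in nhds 0. x + s *\<^sub>R h \<noteq> 0"
    using x by (intro tendsto_imp_eventually_ne[of _ x]) (auto intro!: tendsto_eq_intros filterlim_ident)
  then have near: "\<forall>\<^sub>F s in nhds 0.
      c powr (p - real j) * D j (x + s *\<^sub>R h) ws = D j (c *\<^sub>R x + s *\<^sub>R (c *\<^sub>R h)) ws"
  proof eventually_elim
    case (elim s)
    have "c *\<^sub>R x + s *\<^sub>R (c *\<^sub>R h) = c *\<^sub>R (x + s *\<^sub>R h)" by (simp add: algebra_simps)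
    then show ?case using Suc.IH[OF _ elim c ws] j by simp
  qed
  text \<open>Both sides are derivatives of \<open>\<lambda>s. D j (c *\<^sub>R (x + s *\<^sub>R h)) ws\<close> at \<open>0\<close>:
    via the induction hypothesis and via the chain rule, respectively.\<close>
  have "((\<lambda>s. c powr (p - real j) * D j (x + s *\<^sub>R h) ws)
      has_real_derivative c powr (p - real j) * D (Suc j) x (h # ws)) (at 0)"
    using higher_derivs_has_real_derivative_along_line[OF hd U j, of x 0 h ws] x ws by (auto intro: DERIV_cmult)
  then have "((\<lambda>s. D j (c *\<^sub>R x + s *\<^sub>R (c *\<^sub>R h)) ws)
      has_real_derivative c powr (p - real j) * D (Suc j) x (h # ws)) (at 0)"
    by (rule DERIV_cong_ev[OF refl near refl, THEN iffD1])
  moreover have "((\<lambda>s. D j (c *\<^sub>R x + s *\<^sub>R (c *\<^sub>R h)) ws)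
      has_real_derivative D (Suc j) (c *\<^sub>R x) ((c *\<^sub>R h) # ws)) (at 0)"
    using higher_derivs_has_real_derivative_along_line[OF hd U j, of "c *\<^sub>R x" 0 "c *\<^sub>R h" ws] x c ws by simp
  ultimately have "D (Suc j) (c *\<^sub>R x) ((c *\<^sub>R h) # ws) = c powr (p - real j) * D (Suc j) x (h # ws)"
    by (rule DERIV_unique[rotated])
  moreover have "D (Suc j) (c *\<^sub>R x) ((c *\<^sub>R h) # ws) = c * D (Suc j) (c *\<^sub>R x) (h # ws)"
    using higher_derivsD(2)[OF hd Suc.prems(1)] x c ws
    by (intro multilinear_form_Cons_scaleR) (auto simp: length_unit_lists)
  moreover have "c powr (p - real j) = c * c powr (p - real (Suc j))"
  proof -
    have "c powr (p - real j) = c powr (1 + (p - real (Suc j)))" by simp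
    also have "\<dots> = c powr 1 * c powr (p - real (Suc j))" by (rule powr_add)
    finally show ?thesis using c by simp
  qed
  ultimately show ?case using vs c by simp
qed

lemma higher_derivs_Euler:
  fixes f :: "'a::real_normed_vector \<Rightarrow> real"
  assumes hd: "higher_derivs f D n (- {0})" and ph: "p_homogeneous p f"
    and j: "j < n" and x: "x \<noteq> 0" and vs: "vs \<in> unit_lists j"
  shows "D (Suc j) x (x # vs) = (p - real j) * D j x vs"
proof -
  have "((\<lambda>s. D j (0 + s *\<^sub>R x) vs) has_real_derivative D (Suc j) x (x # vs)) (at 1)"
    using higher_derivs_has_real_derivative_along_line[OF hd _ j, of 0 1 x vs] x vs by auto
  moreover have "((\<lambda>s. D j (0 + s *\<^sub>R x) vs) has_real_derivative (p - real j) * D j x vs) (at 1)"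
  proof -
    have "\<forall>\<^sub>F s in nhds (1::real). s \<in> {0<..}"
      by (rule eventually_nhds_in_open) auto
    then have "\<forall>\<^sub>F s in nhds 1. s powr (p - real j) * D j x vs = D j (0 + s *\<^sub>R x) vs"
      by eventually_elim (use higher_derivs_homogeneous[OF hd ph] j x vs in simp)
    moreover have "((\<lambda>s. s powr (p - real j) * D j x vs)
        has_real_derivative (p - real j) * 1 powr (p - real j - 1) * D j x vs) (at 1)"
      by (intro DERIV_cmult_right has_real_derivative_powr) simp
    ultimately show ?thesis by (simp add: DERIV_cong_ev)
  qed
  ultimately show ?thesis by (rule DERIV_unique)
qed

lemma bounded_on_sphere_if_hoelder:
  fixes G :: "'a::real_normed_vector \<Rightarrow> 'a list \<Rightarrow> real"
  assumes bf: "\<And>x. norm x = 1 \<Longrightarrow> bounded_form n (G x)" and a: "0 \<le> a"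
    and K: "\<And>x y. norm x = 1 \<Longrightarrow> norm y = 1 \<Longrightarrow>
              mnorm n (\<lambda>vs. G x vs - G y vs) \<le> K * norm (x - y) powr a"
  shows "\<exists>B>0. \<forall>x. norm x = 1 \<longrightarrow> mnorm n (G x) \<le> B"
proof (cases "\<exists>e::'a. norm e = 1")
  case False
  then show ?thesis by (auto intro: exI[of _ 1])
next
  case True
  then obtain e :: 'a where e: "norm e = 1" by blast
  have "mnorm n (G x) \<le> mnorm n (G e) + \<bar>K\<bar> * 2 powr a" if x: "norm x = 1" for x
  proof -
    have "norm (x - e) powr a \<le> 2 powr a"
      using norm_triangle_ineq4[of x e] x e a by (intro powr_mono2) auto
    then have "K * norm (x - e) powr a \<le> \<bar>K\<bar> * 2 powr a"
      by (meson abs_ge_self abs_ge_zero mult_mono order_trans powr_ge_zero)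
    then have diff: "mnorm n (\<lambda>vs. G x vs - G e vs) \<le> \<bar>K\<bar> * 2 powr a"
      using K[OF x e] by linarith
    have "mnorm n (G x) = mnorm n (\<lambda>vs. (G x vs - G e vs) + G e vs)" by simp
    also have "\<dots> \<le> mnorm n (\<lambda>vs. G x vs - G e vs) + mnorm n (G e)"
      using bf x e by (intro mnorm_add_le bounded_form_diff) auto
    finally show ?thesis using diff by linarith
  qed
  moreover have "0 < mnorm n (G e) + \<bar>K\<bar> * 2 powr a + 1"
    using mnorm_nonneg[OF bf[OF e]] by (simp add: add_nonneg_pos)
  ultimately show ?thesis by (intro exI[of _ "mnorm n (G e) + \<bar>K\<bar> * 2 powr a + 1"]) force
qed

lemma higher_derivs_sphere_bounds:
  fixes f :: "'a::real_normed_vector \<Rightarrow> real"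
  assumes hd: "higher_derivs f D n (- {0})" and ph: "p_homogeneous p f" and np: "real n < p"
    and a: "0 \<le> a"
    and K: "\<And>x y. norm x = 1 \<Longrightarrow> norm y = 1 \<Longrightarrow>
              mnorm n (\<lambda>vs. D n x vs - D n y vs) \<le> K * norm (x - y) powr a"
  shows "\<exists>B. \<forall>j\<le>n. B j > 0 \<and> (\<forall>x. norm x = 1 \<longrightarrow> mnorm j (D j x) \<le> B j)"
proof -
  have top: "\<exists>b>0. \<forall>x. norm x = 1 \<longrightarrow> mnorm n (D n x) \<le> b"
  proof (rule bounded_on_sphere_if_hoelder[OF _ a K])
    show "norm x = 1 \<Longrightarrow> bounded_form n (D n x)" for x
      using higher_derivsD(3)[OF hd, of n x] by (cases "x = 0") auto
  qed
  have "\<exists>b>0. \<forall>x. norm x = 1 \<longrightarrow> mnorm j (D j x) \<le> b" if "j \<le> n" for j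
    using that
  proof (induction rule: inc_induct)
    case base
    show ?case using top .
  next
    case (step j)
    then obtain b where b: "b > 0" "\<And>x. norm x = 1 \<Longrightarrow> mnorm (Suc j) (D (Suc j) x) \<le> b"
      by blast
    have pj: "p - real j > 0" using step np by simp
    have "mnorm j (D j x) \<le> b / (p - real j)" if x: "norm x = 1" for x
    proof (rule mnorm_least)
      fix vs :: "'a list" assume vs: "vs \<in> unit_lists j"
      have "x \<noteq> 0" using x by auto
      then have "(p - real j) * \<bar>D j x vs\<bar> = \<bar>D (Suc j) x (x # vs)\<bar>"
        using higher_derivs_Euler[OF hd ph step(2) _ vs, of x] pj by (simp add: abs_mult)
      also have "\<dots> \<le> mnorm (Suc j) (D (Suc j) x)"
        using higher_derivsD(3)[OF hd, of "Suc j" x] step(2) x vs \<open>x \<noteq> 0\<close>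
        by (intro mnorm_upper Cons_in_unit_lists) auto
      also have "\<dots> \<le> b" using b(2) x .
      finally show "\<bar>D j x vs\<bar> \<le> b / (p - real j)" using pj by (simp add: field_simps)
    qed
    then show ?case using b pj by (intro exI[of _ "b / (p - real j)"]) auto
  qed
  then show ?thesis by metis
qed

lemma mnorm_le_norm_powr_if_homogeneous:
  fixes G :: "'a::real_normed_vector \<Rightarrow> 'a list \<Rightarrow> real"
  assumes bf: "\<And>x. bounded_form j (G x)"
    and hom: "\<And>x c vs. c > 0 \<Longrightarrow> vs \<in> unit_lists j \<Longrightarrow> G (c *\<^sub>R x) vs = c powr q * G x vs"
    and G0: "\<And>vs. G 0 vs = 0"
    and sphere: "\<And>u. norm u = 1 \<Longrightarrow> mnorm j (G u) \<le> B"
  shows "mnorm j (G y) \<le> B * norm y powr q"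
proof (cases "y = 0")
  case True
  have "G 0 = (\<lambda>vs. 0)" using G0 by auto
  then show ?thesis using True by (simp add: mnorm_zero)
next
  case False
  define u where "u = y /\<^sub>R norm y"
  have u: "norm u = 1" and y: "y = norm y *\<^sub>R u" using False by (auto simp: u_def)
  have "mnorm j (G y) = mnorm j (\<lambda>vs. norm y powr q * G u vs)"
  proof (rule mnorm_cong)
    fix vs :: "'a list" assume "vs \<in> unit_lists j"
    then show "G y vs = norm y powr q * G u vs"
      using hom[of "norm y" vs u] y False by (metis zero_less_norm_iff)
  qed
  also have "\<dots> = norm y powr q * mnorm j (G u)" by (simp add: mnorm_cmult[OF bf])
  also have "\<dots> \<le> norm y powr q * B" using sphere[OF u] by (intro mult_left_mono) auto
  finally show ?thesis by (simp add: mult.commute)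
qed

lemma one_minus_powr_le:
  fixes t q :: real
  assumes t: "0 \<le> t" "t \<le> 1" and q: "0 < q"
  shows "1 - t powr q \<le> max 1 q * (1 - t)"
proof (cases "q \<le> 1")
  case True
  have "t powr 1 \<le> t powr q" using t q True by (intro powr_mono') auto
  then have "1 - t powr q \<le> 1 - t" using t by (cases "t = 0") auto
  also have "\<dots> \<le> max 1 q * (1 - t)" using mult_right_mono[of 1 "max 1 q" "1 - t"] t by simp
  finally show ?thesis .
next
  case False
  consider "t = 0" | "t = 1" | "0 < t" "t < 1" using t by linarith
  then show ?thesis
  proof cases
    case 3
    have "\<And>x. t \<le> x \<Longrightarrow> x \<le> 1 \<Longrightarrow> ((\<lambda>z. z powr q) has_real_derivative q * x powr (q - 1)) (at x)"
      using 3 by (intro has_real_derivative_powr) auto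
    then obtain \<xi> where \<xi>: "t < \<xi>" "\<xi> < 1" and eq: "1 powr q - t powr q = (1 - t) * (q * \<xi> powr (q - 1))"
      using MVT2[OF 3(2), of "\<lambda>z. z powr q" "\<lambda>x. q * x powr (q - 1)"] by blast
    have "\<xi> powr (q - 1) \<le> 1" using \<xi> 3 False by (intro powr_le1) auto
    then have "(1 - t) * (q * \<xi> powr (q - 1)) \<le> (1 - t) * q"
      using 3 q by (intro mult_left_mono) (auto simp: mult_left_le)
    then show ?thesis using eq False by (simp add: mult.commute)
  qed (use False in auto)
qed

lemma radial_projection_to_sphere:
  fixes u w :: "'a::real_normed_vector"
  assumes u: "norm u = 1" and w: "norm w \<le> 1"
  obtains w' where "norm w' = 1" "w = norm w *\<^sub>R w'" "norm (u - w') \<le> 2 * norm (u - w)"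
proof
  define w' where "w' = (if w = 0 then u else w /\<^sub>R norm w)"
  show w': "norm w' = 1" and ww': "w = norm w *\<^sub>R w'"
    using u by (auto simp: w'_def)
  have "w - w' = (norm w - 1) *\<^sub>R w'" using ww' by (simp add: algebra_simps)
  then have "norm (w - w') = 1 - norm w" using w' w by simp
  also have "\<dots> \<le> norm (u - w)" using norm_triangle_ineq2[of u w] u by simp
  finally show "norm (u - w') \<le> 2 * norm (u - w)"
    using norm_triangle_ineq[of "u - w" "w - w'"] by simp
qed

lemma homogeneous_hoelder_on_unit_ball:
  fixes G :: "'a::real_normed_vector \<Rightarrow> 'a list \<Rightarrow> real"
  assumes bf: "\<And>x. bounded_form n (G x)"
    and hom: "\<And>x c vs. c > 0 \<Longrightarrow> vs \<in> unit_lists n \<Longrightarrow> G (c *\<^sub>R x) vs = c powr q * G x vs"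
    and G0: "\<And>vs. G 0 vs = 0" and q: "0 < q" and a: "0 < a" "a \<le> 1"
    and sphere: "\<And>x. norm x = 1 \<Longrightarrow> mnorm n (G x) \<le> B"
    and K: "\<And>x y. norm x = 1 \<Longrightarrow> norm y = 1 \<Longrightarrow>
              mnorm n (\<lambda>vs. G x vs - G y vs) \<le> K * norm (x - y) powr a"
    and u: "norm u = 1" and w: "norm w \<le> 1"
  shows "mnorm n (\<lambda>vs. G u vs - G w vs) \<le> (2 * \<bar>K\<bar> + max 1 q * B) * norm (u - w) powr a"
proof -
  define d where "d = norm (u - w)"
  define t where "t = norm w"
  obtain w' where w': "norm w' = 1" and ww': "w = t *\<^sub>R w'" and uw': "norm (u - w') \<le> 2 * d"
    using radial_projection_to_sphere[OF u w] unfolding t_def d_def .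
  have t: "0 \<le> t" "t \<le> 1" "1 - t \<le> d"
    using w u norm_triangle_ineq2[of u w] by (auto simp: t_def d_def)
  have B: "0 \<le> B" using sphere[OF u] mnorm_nonneg[OF bf] by (meson order_trans)
  have "norm (u - w') powr a \<le> 2 powr a * d powr a"
    using uw' a by (simp add: powr_mono2 flip: powr_mult)
  also have "\<dots> \<le> 2 * d powr a"
    using powr_mono[of a 1 2] a by (intro mult_right_mono) auto
  finally have "K * norm (u - w') powr a \<le> \<bar>K\<bar> * (2 * d powr a)"
    by (meson abs_ge_self abs_ge_zero mult_left_mono mult_right_mono order_trans powr_ge_zero)
  then have to_sphere: "mnorm n (\<lambda>vs. G u vs - G w' vs) \<le> 2 * \<bar>K\<bar> * d powr a"
    using K[OF u w'] by simp
  have tq: "0 \<le> 1 - t powr q" using powr_le1[of q t] q t by simp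
  have "1 - t \<le> (1 - t) powr a"
    using powr_mono'[of a 1 "1 - t"] t a by (cases "t = 1") auto
  also have "\<dots> \<le> d powr a" using t a by (intro powr_mono2) auto
  finally have "1 - t powr q \<le> max 1 q * d powr a"
    using one_minus_powr_le[OF t(1,2) q] mult_left_mono[of _ _ "max 1 q"] by fastforce
  then have "(1 - t powr q) * mnorm n (G w') \<le> max 1 q * d powr a * B"
    using sphere[OF w'] tq mnorm_nonneg[OF bf] by (intro mult_mono) auto
  then have radial: "mnorm n (\<lambda>vs. (1 - t powr q) * G w' vs) \<le> max 1 q * B * d powr a"
    using mnorm_cmult[OF bf, of "1 - t powr q" w'] tq by (simp add: mult_ac)
  have "mnorm n (\<lambda>vs. G u vs - G w vs)
      = mnorm n (\<lambda>vs. (G u vs - G w' vs) + (1 - t powr q) * G w' vs)"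
  proof (rule mnorm_cong)
    fix vs :: "'a list" assume "vs \<in> unit_lists n"
    \<comment> \<open>for \<open>w = 0\<close> this holds because \<open>G 0 = 0\<close> and \<open>0 powr q = 0\<close>\<close>
    then have "G w vs = t powr q * G w' vs"
      using hom[of t vs w'] G0 ww' t(1) by (cases "t = 0") auto
    then show "G u vs - G w vs = (G u vs - G w' vs) + (1 - t powr q) * G w' vs"
      by (simp add: algebra_simps)
  qed
  also have "\<dots> \<le> mnorm n (\<lambda>vs. G u vs - G w' vs) + mnorm n (\<lambda>vs. (1 - t powr q) * G w' vs)"
    by (intro mnorm_add_le bounded_form_diff bounded_form_cmult bf)
  finally show ?thesis using to_sphere radial by (simp add: d_def algebra_simps)
qed

lemma homogeneous_hoelder_from_unit_ball:
  fixes G :: "'a::real_normed_vector \<Rightarrow> 'a list \<Rightarrow> real"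
  assumes bf: "\<And>x. bounded_form n (G x)"
    and hom: "\<And>x c vs. c > 0 \<Longrightarrow> vs \<in> unit_lists n \<Longrightarrow> G (c *\<^sub>R x) vs = c powr q * G x vs"
    and unit: "\<And>u w. norm u = 1 \<Longrightarrow> norm w \<le> 1 \<Longrightarrow>
                 mnorm n (\<lambda>vs. G u vs - G w vs) \<le> C * norm (u - w) powr a"
    and C: "0 \<le> C" and xy: "norm y \<le> norm x"
  shows "mnorm n (\<lambda>vs. G x vs - G y vs) \<le> C * (max (norm x) (norm y)) powr (q - a) * norm (x - y) powr a"
proof (cases "x = 0")
  case True
  then show ?thesis using xy by (simp add: mnorm_zero)
next
  case False
  define s where "s = norm x"
  have s: "s > 0" "max (norm x) (norm y) = s" using False xy by (auto simp: s_def)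
  define u where "u = x /\<^sub>R s"
  define w where "w = y /\<^sub>R s"
  have x: "x = s *\<^sub>R u" and y: "y = s *\<^sub>R w" using s by (simp_all add: u_def w_def)
  have u: "norm u = 1" and w: "norm w \<le> 1"
    using s xy by (simp_all add: u_def w_def s_def field_simps)
  have "mnorm n (\<lambda>vs. G x vs - G y vs) = mnorm n (\<lambda>vs. s powr q * (G u vs - G w vs))"
  proof (rule mnorm_cong)
    fix vs :: "'a list" assume "vs \<in> unit_lists n"
    then have "G x vs = s powr q * G u vs" "G y vs = s powr q * G w vs"
      unfolding x y using hom s(1) by auto
    then show "G x vs - G y vs = s powr q * (G u vs - G w vs)"
      by (simp add: right_diff_distrib)
  qed
  also have "\<dots> = s powr q * mnorm n (\<lambda>vs. G u vs - G w vs)"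
    using mnorm_cmult[OF bounded_form_diff[OF bf bf]] s(1) by simp
  also have "\<dots> \<le> s powr q * (C * norm (u - w) powr a)"
    using unit[OF u w] by (rule mult_left_mono) simp
  also have "\<dots> = C * s powr (q - a) * (s powr a * norm (u - w) powr a)"
  proof -
    have "s powr q = s powr (q - a) * s powr a" by (simp flip: powr_add)
    then show ?thesis by (simp add: mult_ac)
  qed
  also have "s powr a * norm (u - w) powr a = norm (x - y) powr a"
  proof -
    have "norm (x - y) = s * norm (u - w)"
      using s(1) by (simp add: x y flip: scaleR_diff_right)
    then show ?thesis using s(1) by (simp add: powr_mult)
  qed
  finally show ?thesis using s(2) by simp
qed

lemma homogeneous_hoelder_from_sphere:
  fixes G :: "'a::real_normed_vector \<Rightarrow> 'a list \<Rightarrow> real"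
  assumes bf: "\<And>x. bounded_form n (G x)"
    and hom: "\<And>x c vs. c > 0 \<Longrightarrow> vs \<in> unit_lists n \<Longrightarrow> G (c *\<^sub>R x) vs = c powr q * G x vs"
    and G0: "\<And>vs. G 0 vs = 0" and q: "0 < q" and a: "0 < a" "a \<le> 1"
    and K: "\<And>x y. norm x = 1 \<Longrightarrow> norm y = 1 \<Longrightarrow>
              mnorm n (\<lambda>vs. G x vs - G y vs) \<le> K * norm (x - y) powr a"
  shows "\<exists>C>0. \<forall>x y. mnorm n (\<lambda>vs. G x vs - G y vs)
           \<le> C * (max (norm x) (norm y)) powr (q - a) * norm (x - y) powr a"
proof -
  have "\<exists>B>0. \<forall>x. norm x = 1 \<longrightarrow> mnorm n (G x) \<le> B"
    using a by (intro bounded_on_sphere_if_hoelder[where K = K and a = a] bf K) auto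
  then obtain B where B: "B > 0" "\<And>x. norm x = 1 \<Longrightarrow> mnorm n (G x) \<le> B"
    by blast
  define C where "C = 2 * \<bar>K\<bar> + max 1 q * B"
  have C: "C > 0" using B by (simp add: C_def add_nonneg_pos)
  have le: "mnorm n (\<lambda>vs. G x vs - G y vs)
      \<le> C * (max (norm x) (norm y)) powr (q - a) * norm (x - y) powr a"
    if "norm y \<le> norm x" for x y
  proof (rule homogeneous_hoelder_from_unit_ball[OF bf hom _ _ that])
    show "mnorm n (\<lambda>vs. G u vs - G w vs) \<le> C * norm (u - w) powr a"
      if "norm u = 1" "norm w \<le> 1" for u w
      unfolding C_def by (rule homogeneous_hoelder_on_unit_ball[OF bf hom G0 q a B(2) K that])
  next
    show "0 \<le> C" using C by linarith
  qed
  have "mnorm n (\<lambda>vs. G x vs - G y vs) \<le> C * (max (norm x) (norm y)) powr (q - a) * norm (x - y) powr a"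
    for x y
  proof (cases "norm y \<le> norm x")
    case False
    then have "norm x \<le> norm y" by linarith
    then have "mnorm n (\<lambda>vs. G y vs - G x vs)
        \<le> C * (max (norm y) (norm x)) powr (q - a) * norm (y - x) powr a"
      by (rule le)
    then show ?thesis
      by (simp add: mnorm_minus_commute[of n "G x"] max.commute norm_minus_commute)
  qed (rule le)
  then show ?thesis using C by blast
qed

lemma higher_derivs_lipschitz:
  fixes D :: "nat \<Rightarrow> 'a::real_normed_vector \<Rightarrow> 'a list \<Rightarrow> real"
  assumes hd: "higher_derivs f D n UNIV" and j: "j < n"
    and growth: "\<And>z. mnorm (Suc j) (D (Suc j) z) \<le> b * norm z powr e" and b: "0 \<le> b" and e: "0 \<le> e"
  shows "mnorm j (\<lambda>vs. D j x vs - D j y vs) \<le> b * (max (norm x) (norm y)) powr e * norm (x - y)"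
proof (rule mnorm_least)
  fix vs :: "'a list" assume vs: "vs \<in> unit_lists j"
  have "\<And>s. ((\<lambda>s. D j (y + s *\<^sub>R (x - y)) vs)
      has_real_derivative D (Suc j) (y + s *\<^sub>R (x - y)) ((x - y) # vs)) (at s)"
    by (rule higher_derivs_has_real_derivative_along_line[OF hd _ j _ vs]) auto
  then obtain \<xi> where \<xi>: "0 < \<xi>" "\<xi> < 1"
    and mvt: "D j x vs - D j y vs = D (Suc j) (y + \<xi> *\<^sub>R (x - y)) ((x - y) # vs)"
    using MVT2[of 0 1 "\<lambda>s. D j (y + s *\<^sub>R (x - y)) vs"] by force
  define z where "z = y + \<xi> *\<^sub>R (x - y)"
  have "norm z \<le> (1 - \<xi>) * norm y + \<xi> * norm x"
  proof -
    have "z = (1 - \<xi>) *\<^sub>R y + \<xi> *\<^sub>R x" by (simp add: z_def algebra_simps)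
    then show ?thesis using norm_triangle_ineq[of "(1 - \<xi>) *\<^sub>R y" "\<xi> *\<^sub>R x"] \<xi> by simp
  qed
  also have "\<dots> \<le> (1 - \<xi>) * max (norm x) (norm y) + \<xi> * max (norm x) (norm y)"
    using \<xi> by (intro add_mono mult_left_mono) auto
  finally have z: "norm z \<le> max (norm x) (norm y)" by (simp add: algebra_simps)
  have "\<bar>D j x vs - D j y vs\<bar> \<le> mnorm (Suc j) (D (Suc j) z) * norm (x - y)"
    unfolding mvt z_def[symmetric] using higher_derivsD(2,3)[OF hd] j vs
    by (intro abs_form_Cons_le) auto
  also have "\<dots> \<le> b * norm z powr e * norm (x - y)"
    using growth by (intro mult_right_mono) auto
  also have "\<dots> \<le> b * (max (norm x) (norm y)) powr e * norm (x - y)"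
    using z b e by (intro mult_right_mono mult_left_mono powr_mono2) auto
  finally show "\<bar>D j x vs - D j y vs\<bar> \<le> b * (max (norm x) (norm y)) powr e * norm (x - y)" .
qed

definition extend_at_zero :: "(nat \<Rightarrow> 'a::zero \<Rightarrow> 'a list \<Rightarrow> real) \<Rightarrow> nat \<Rightarrow> 'a \<Rightarrow> 'a list \<Rightarrow> real" where
  "extend_at_zero D j x = (if x = 0 then (\<lambda>vs. 0) else D j x)"

lemma extend_at_zero_zero [simp]: "extend_at_zero D j 0 = (\<lambda>vs. 0)"
  by (simp add: extend_at_zero_def)

lemma extend_at_zero_nonzero [simp]: "x \<noteq> 0 \<Longrightarrow> extend_at_zero D j x = D j x"
  by (simp add: extend_at_zero_def)

lemma extend_at_zero_multilinear_form:
  assumes "higher_derivs f D n (- {0})" "j \<le> n"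
  shows "multilinear_form j (extend_at_zero D j x)"
  using higher_derivsD(2)[OF assms] by (cases "x = 0") (auto simp: multilinear_form_def linear_zero)

lemma extend_at_zero_bounded_form:
  assumes "higher_derivs f D n (- {0})" "j \<le> n"
  shows "bounded_form j (extend_at_zero D j x)"
  using higher_derivsD(3)[OF assms] by (cases "x = 0") (auto simp: bounded_form_zero)

lemma extend_at_zero_homogeneous:
  fixes f :: "'a::real_normed_vector \<Rightarrow> real"
  assumes "higher_derivs f D n (- {0})" "p_homogeneous p f"
    and "j \<le> n" "c > 0" "vs \<in> unit_lists j"
  shows "extend_at_zero D j (c *\<^sub>R x) vs = c powr (p - real j) * extend_at_zero D j x vs"
  using higher_derivs_homogeneous[OF assms(1,2,3) _ assms(4,5)] assms(4) by (cases "x = 0") auto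

lemma extend_at_zero_growth:
  fixes f :: "'a::real_normed_vector \<Rightarrow> real"
  assumes hd: "higher_derivs f D n (- {0})" and ph: "p_homogeneous p f" and j: "j \<le> n"
    and sphere: "\<And>x. norm x = 1 \<Longrightarrow> mnorm j (D j x) \<le> B"
  shows "mnorm j (extend_at_zero D j y) \<le> B * norm y powr (p - real j)"
proof (rule mnorm_le_norm_powr_if_homogeneous)
  show "bounded_form j (extend_at_zero D j x)" for x
    by (rule extend_at_zero_bounded_form[OF hd j])
  show "extend_at_zero D j (c *\<^sub>R x) vs = c powr (p - real j) * extend_at_zero D j x vs"
    if "c > 0" "vs \<in> unit_lists j" for x c vs
    by (rule extend_at_zero_homogeneous[OF hd ph j that])
  show "norm u = 1 \<Longrightarrow> mnorm j (extend_at_zero D j u) \<le> B" for u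
    using sphere[of u] by (cases "u = 0") auto
qed simp

lemma tendsto_zero_if_le_norm_powr:
  fixes g :: "'a::real_normed_vector \<Rightarrow> real"
  assumes e: "0 < e" and g: "\<And>y. y \<noteq> 0 \<Longrightarrow> 0 \<le> g y \<and> g y \<le> B * norm y powr e"
  shows "(g \<longlongrightarrow> 0) (at 0)"
proof (rule tendsto_0_le[of "\<lambda>y. norm y powr e"])
  show "((\<lambda>y. norm y powr e) \<longlongrightarrow> 0) (at 0)"
    by (rule tendsto_zero_powrI) (auto intro: tendsto_norm_zero e)
  show "\<forall>\<^sub>F y in at 0. norm (g y) \<le> norm (norm y powr e) * B"
    using eventually_neq_at_within[of 0 0] by eventually_elim (use g in \<open>simp add: mult.commute\<close>)
qed

lemma extend_at_zero_remainder_at_zero: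
  fixes f :: "'a::real_normed_vector \<Rightarrow> real"
  assumes hd: "higher_derivs f D n (- {0})" and j: "j < n" and np: "real n < p"
    and growth: "\<And>y. mnorm j (extend_at_zero D j y) \<le> b * norm y powr (p - real j)"
  shows "((\<lambda>y. mnorm j (extend_at_zero D j y) / norm y) \<longlongrightarrow> 0) (at 0)"
proof (rule tendsto_zero_if_le_norm_powr)
  have "real (Suc j) \<le> real n" using j by simp
  then show "0 < p - real j - 1" using np by simp
  show "0 \<le> mnorm j (extend_at_zero D j y) / norm y \<and>
      mnorm j (extend_at_zero D j y) / norm y \<le> b * norm y powr (p - real j - 1)" if "y \<noteq> 0" for y
  proof
    show "0 \<le> mnorm j (extend_at_zero D j y) / norm y"
      using mnorm_nonneg[OF extend_at_zero_bounded_form[OF hd]] j by simp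
    have "mnorm j (extend_at_zero D j y) / norm y \<le> b * norm y powr (p - real j) / norm y"
      using growth[of y] by (simp add: divide_right_mono)
    also have "\<dots> = b * norm y powr (p - real j - 1)"
      using that by (simp add: powr_diff)
    finally show "mnorm j (extend_at_zero D j y) / norm y \<le> b * norm y powr (p - real j - 1)" .
  qed
qed

lemma higher_derivs_extend_at_zero:
  fixes f :: "'a::real_normed_vector \<Rightarrow> real"
  assumes hd: "higher_derivs f D n (- {0})" and f0: "f 0 = 0" and np: "real n < p"
    and growth: "\<And>j y. j \<le> n \<Longrightarrow> mnorm j (extend_at_zero D j y) \<le> B j * norm y powr (p - real j)"
  shows "higher_derivs f (extend_at_zero D) n UNIV"
proof -
  let ?D = "extend_at_zero D"
  have deriv: "((\<lambda>y. mnorm j (\<lambda>vs. ?D j y vs - ?D j x vs - ?D (Suc j) x ((y - x) # vs))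
      / norm (y - x)) \<longlongrightarrow> 0) (at x)" if j: "j < n" for j x
  proof (cases "x = 0")
    case False
    show ?thesis
    proof (rule Lim_transform_eventually[OF higher_derivsD(4)[OF hd j]])
      show "x \<in> - {0}" using False by simp
      show "\<forall>\<^sub>F y in at x. mnorm j (\<lambda>vs. D j y vs - D j x vs - D (Suc j) x ((y - x) # vs)) / norm (y - x)
          = mnorm j (\<lambda>vs. ?D j y vs - ?D j x vs - ?D (Suc j) x ((y - x) # vs)) / norm (y - x)"
        using eventually_neq_at_within[of 0 x] by eventually_elim (simp add: False)
    qed
  next
    case True
    then show ?thesis
      using extend_at_zero_remainder_at_zero[OF hd j np growth] j by simp
  qed
  have cont: "((\<lambda>y. mnorm n (\<lambda>vs. ?D n y vs - ?D n x vs)) \<longlongrightarrow> 0) (at x)" for x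
  proof (cases "x = 0")
    case False
    have "at x within - {0} = at x" using False by (intro at_within_open) auto
    then have "((\<lambda>y. mnorm n (\<lambda>vs. D n y vs - D n x vs)) \<longlongrightarrow> 0) (at x)"
      using higher_derivsD(5)[OF hd, of x] False by simp
    then show ?thesis
      by (rule Lim_transform_eventually)
        (use eventually_neq_at_within[of 0 x] in \<open>eventually_elim, simp add: False\<close>)
  next
    case True
    have "((\<lambda>y. mnorm n (?D n y)) \<longlongrightarrow> 0) (at 0)"
    proof (rule tendsto_zero_if_le_norm_powr[of "p - real n" _ "B n"])
      show "0 \<le> mnorm n (?D n y) \<and> mnorm n (?D n y) \<le> B n * norm y powr (p - real n)" for y
        using growth[of n y] mnorm_nonneg[OF extend_at_zero_bounded_form[OF hd order.refl, of y]]
        by blast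
    qed (use np in simp)
    then show ?thesis using True by simp
  qed
  show ?thesis
    unfolding higher_derivs_def using f0 higher_derivsD(1)[OF hd] deriv cont
      extend_at_zero_multilinear_form[OF hd] extend_at_zero_bounded_form[OF hd]
    by (auto simp: extend_at_zero_def)
qed

lemma extend_at_zero_hoelder:
  fixes f :: "'a::real_normed_vector \<Rightarrow> real"
  assumes hd: "higher_derivs f D n (- {0})" and ph: "p_homogeneous p f" and np: "real n < p"
    and a: "0 < a" "a \<le> 1"
    and K: "\<And>x y. norm x = 1 \<Longrightarrow> norm y = 1 \<Longrightarrow>
              mnorm n (\<lambda>vs. D n x vs - D n y vs) \<le> K * norm (x - y) powr a"
  shows "\<exists>C>0. \<forall>x y. mnorm n (\<lambda>vs. extend_at_zero D n x vs - extend_at_zero D n y vs)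
           \<le> C * (max (norm x) (norm y)) powr (p - real n - a) * norm (x - y) powr a"
proof (rule homogeneous_hoelder_from_sphere[OF _ _ _ _ a])
  show "bounded_form n (extend_at_zero D n x)" for x
    by (rule extend_at_zero_bounded_form[OF hd order.refl])
  show "extend_at_zero D n (c *\<^sub>R x) vs = c powr (p - real n) * extend_at_zero D n x vs"
    if "c > 0" "vs \<in> unit_lists n" for x c vs
    by (rule extend_at_zero_homogeneous[OF hd ph order.refl that])
  show "mnorm n (\<lambda>vs. extend_at_zero D n x vs - extend_at_zero D n y vs) \<le> K * norm (x - y) powr a"
    if "norm x = 1" "norm y = 1" for x y
  proof -
    have "x \<noteq> 0" "y \<noteq> 0" using that by auto
    then show ?thesis using K[OF that] by simp
  qed
qed (use np in auto)

lemma higher_derivs_extend_at_zero_homogeneous: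
  fixes f :: "'a::real_normed_vector \<Rightarrow> real"
  assumes hd: "higher_derivs f D n (- {0})" and ph: "p_homogeneous p f" and np: "real n < p"
    and B: "\<forall>j\<le>n. B j > 0 \<and> (\<forall>x. norm x = 1 \<longrightarrow> mnorm j (D j x) \<le> B j)"
  shows "higher_derivs f (extend_at_zero D) n UNIV"
  using B by (intro higher_derivs_extend_at_zero[OF hd p_homogeneous_zero[OF ph] np]
      extend_at_zero_growth[OF hd ph]) auto

lemma extend_at_zero_lipschitz:
  fixes f :: "'a::real_normed_vector \<Rightarrow> real"
  assumes hd: "higher_derivs f D n (- {0})" and ph: "p_homogeneous p f" and np: "real n < p"
    and B: "\<forall>j\<le>n. B j > 0 \<and> (\<forall>x. norm x = 1 \<longrightarrow> mnorm j (D j x) \<le> B j)" and j: "j < n"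
  shows "mnorm j (\<lambda>vs. extend_at_zero D j x vs - extend_at_zero D j y vs)
    \<le> B (Suc j) * (max (norm x) (norm y)) powr (p - real (j + 1)) * norm (x - y)"
proof (rule higher_derivs_lipschitz[OF higher_derivs_extend_at_zero_homogeneous[OF hd ph np B] j])
  have "real (j + 1) \<le> real n" using j by simp
  then show "0 \<le> p - real (j + 1)" using np by linarith
  have "Suc j \<le> n" using j by simp
  then show "0 \<le> B (Suc j)" using B less_imp_le by blast
  show "mnorm (Suc j) (extend_at_zero D (Suc j) z) \<le> B (Suc j) * norm z powr (p - real (j + 1))" for z
    using extend_at_zero_growth[OF hd ph \<open>Suc j \<le> n\<close>, of "B (Suc j)" z] B \<open>Suc j \<le> n\<close> by auto
qed

theorem lemma2p2:
  fixes f :: "'a::banach \<Rightarrow> real" and r p :: real and n :: nat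
    and D :: "nat \<Rightarrow> 'a \<Rightarrow> 'a list \<Rightarrow> real"
  assumes "1 < r" and "r \<le> p"
    and "n = nat (\<lceil>r\<rceil> - 1)"
    and "p_homogeneous p f"
    and "higher_derivs f D n (- {0})"
    and "\<exists>K. \<forall>x y. norm x = 1 \<longrightarrow> norm y = 1 \<longrightarrow>
           mnorm n (\<lambda>vs. D n x vs - D n y vs) \<le> K * norm (x - y) powr (r - real n)"
  shows "\<exists>D'. higher_derivs f D' n UNIV \<and>
           (\<forall>j\<in>{1..n}. \<forall>vs. length vs = j \<longrightarrow> D' j 0 vs = 0) \<and>
           (\<exists>C :: nat \<Rightarrow> real. (\<forall>j\<in>{1..n}. C j > 0) \<and>
              (\<forall>x y. mnorm n (\<lambda>vs. D' n x vs - D' n y vs)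
                 \<le> C n * (max (norm x) (norm y)) powr (p - r) * norm (x - y) powr (r - real n)) \<and>
              (\<forall>j\<in>{1..<n}. \<forall>x y. mnorm j (\<lambda>vs. D' j x vs - D' j y vs)
                 \<le> C j * (max (norm x) (norm y)) powr (p - real (j + 1)) * norm (x - y)))"
proof -
  note hd = assms(5) and ph = assms(4)
  have "real n = of_int \<lceil>r\<rceil> - 1" using assms(1,3) by linarith
  then have a: "0 < r - real n" "r - real n \<le> 1" by linarith+
  then have np: "real n < p" using assms(2) by linarith
  obtain K where K: "\<And>x y. norm x = 1 \<Longrightarrow> norm y = 1 \<Longrightarrow>
      mnorm n (\<lambda>vs. D n x vs - D n y vs) \<le> K * norm (x - y) powr (r - real n)"
    using assms(6) by blast
  obtain B where B: "\<forall>j\<le>n. B j > 0 \<and> (\<forall>x. norm x = 1 \<longrightarrow> mnorm j (D j x) \<le> B j)"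
    using higher_derivs_sphere_bounds[OF hd ph np less_imp_le[OF a(1)] K] by blast
  obtain Cn where Cn: "Cn > 0" "\<forall>x y. mnorm n (\<lambda>vs. extend_at_zero D n x vs - extend_at_zero D n y vs)
      \<le> Cn * (max (norm x) (norm y)) powr (p - real n - (r - real n)) * norm (x - y) powr (r - real n)"
    using extend_at_zero_hoelder[OF hd ph np a K] by blast
  define C where "C j = (if j = n then Cn else B (Suc j))" for j
  have "\<forall>j\<in>{1..n}. C j > 0" using Cn(1) B by (auto simp: C_def)
  moreover have "\<forall>x y. mnorm n (\<lambda>vs. extend_at_zero D n x vs - extend_at_zero D n y vs)
      \<le> C n * (max (norm x) (norm y)) powr (p - r) * norm (x - y) powr (r - real n)"
    using Cn(2) by (simp add: C_def)
  moreover have "\<forall>j\<in>{1..<n}. \<forall>x y. mnorm j (\<lambda>vs. extend_at_zero D j x vs - extend_at_zero D j y vs)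
      \<le> C j * (max (norm x) (norm y)) powr (p - real (j + 1)) * norm (x - y)"
    using extend_at_zero_lipschitz[OF hd ph np B] by (simp add: C_def)
  moreover have "\<forall>j\<in>{1..n}. \<forall>vs. length vs = j \<longrightarrow> extend_at_zero D j 0 vs = 0" by simp
  ultimately show ?thesis
    using higher_derivs_extend_at_zero_homogeneous[OF hd ph np B] by blast
qed

end
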